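(* Let $k\ge 3$ and $r\ge 2$ be integers, let $H$ be a selfish $k$-graph with at least one edge, and let $G=G_H$ be a $(k-1)$-graph obtained from $H$ by removing, from each edge of $H$, one vertex of degree one. Then \[ R(H;r)\le R(G;r)+r\,(|E(H)|-1)+1 . \]
   Context: A $k$-graph is a $k$-uniform hypergraph. An edge of a hypergraph is called selfish if it contains a vertex of degree one (a vertex belonging to no other edge); a hypergraph is selfish if every edge is selfish. For a selfish $k$-graph $H$, $G_H$ denotes the $(k-1)$-graph obtained by deleting one degree-one vertex from each edge of $H$ (deleted vertices are removed from the vertex set), so $|E(G_H)|=|E(H)|$. For a $j$-graph $F$ and integer $r\ge2$, $R(F;r)$ is the minimum $n$ such that every $r$-coloring of the edges of the complete $j$-graph $K_n^{(j)}$ contains a monochromatic copy of $F$. *)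

theory Defs
  imports Main
begin

definition is_kgraph :: "nat \<Rightarrow> 'a set \<Rightarrow> 'a set set \<Rightarrow> bool" where
  "is_kgraph k V E \<longleftrightarrow> finite V \<and> (\<forall>e\<in>E. e \<subseteq> V \<and> card e = k)"

definition hdegree :: "'a set set \<Rightarrow> 'a \<Rightarrow> nat" where
  "hdegree E v = card {e\<in>E. v \<in> e}"

definition selfish :: "'a set set \<Rightarrow> bool" where
  "selfish E \<longleftrightarrow> (\<forall>e\<in>E. \<exists>v\<in>e. hdegree E v = 1)"

definition mono_copy :: "nat \<Rightarrow> (nat set \<Rightarrow> nat) \<Rightarrow> nat \<Rightarrow> 'a set \<Rightarrow> 'a set set \<Rightarrow> bool" where
  "mono_copy n col c V E \<longleftrightarrow>
     (\<exists>f. inj_on f V \<and> f ` V \<subseteq> {..<n} \<and> (\<forall>e\<in>E. col (f ` e) = c))"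

definition ramsey_num :: "nat \<Rightarrow> nat \<Rightarrow> 'a set \<Rightarrow> 'a set set \<Rightarrow> nat" where
  "ramsey_num j r V E = (LEAST n. \<forall>col :: nat set \<Rightarrow> nat.
       (\<forall>S. S \<subseteq> {..<n} \<and> card S = j \<longrightarrow> col S < r) \<longrightarrow>
       (\<exists>c<r. mono_copy n col c V E))"

end

theory Submission
  imports Defs "HOL-Library.Ramsey"
begin

text \<open>Colour the $(k-1)$-subsets of the first $R(G;r)$ integers by a colour $c$ such that at
  least $|E(H)|$ of the next $r(|E(H)|-1)+1$ integers extend the subset to a $k$-set of colour
  $c$ (pigeonhole). A monochromatic copy of $G$ for this colouring has, for each edge, $|E(H)|$
  candidates for the deleted degree-one vertex; since these vertices lie in no other edge, they
  can be chosen greedily and distinct, giving a monochromatic copy of $H$.\<close>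

definition is_colouring :: "nat \<Rightarrow> nat \<Rightarrow> nat \<Rightarrow> (nat set \<Rightarrow> nat) \<Rightarrow> bool" where
  "is_colouring j r n col \<longleftrightarrow> (\<forall>S. S \<subseteq> {..<n} \<and> card S = j \<longrightarrow> col S < r)"

definition ramsey_arrow :: "nat \<Rightarrow> nat \<Rightarrow> 'a set \<Rightarrow> 'a set set \<Rightarrow> nat \<Rightarrow> bool" where
  "ramsey_arrow j r V E n \<longleftrightarrow>
     (\<forall>col. is_colouring j r n col \<longrightarrow> (\<exists>c<r. mono_copy n col c V E))"

lemma ramsey_num_eq_Least: "ramsey_num j r V E = (LEAST n. ramsey_arrow j r V E n)"
  by (simp add: ramsey_num_def ramsey_arrow_def is_colouring_def)

lemma ramsey_arrow_exists:
  assumes "is_kgraph j V E"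
  shows "\<exists>n. ramsey_arrow j r V E n"
proof -
  obtain N :: nat where N: "partn_lst {..<N} (replicate r (card V)) j"
    using ramsey_full by blast
  have finV: "finite V" using assms by (simp add: is_kgraph_def)
  have "ramsey_arrow j r V E N"
    unfolding ramsey_arrow_def
  proof (intro allI impI)
    fix col :: "nat set \<Rightarrow> nat"
    assume "is_colouring j r N col"
    then have "col \<in> nsets {..<N} j \<rightarrow> {..<r}" by (auto simp: is_colouring_def nsets_def)
    then obtain c X where c: "c < r" and X: "X \<in> nsets {..<N} (card V)"
        and mono: "col ` nsets X j \<subseteq> {c}"
      using partn_lstE[OF N, of col r] by auto
    have "finite X" "card X = card V" using X by (auto simp: nsets_def)
    then obtain g where g: "bij_betw g V X"
      using finite_same_card_bij[OF finV] by metis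
    have "col (g ` e) = c" if e: "e \<in> E" for e
    proof -
      have "e \<subseteq> V" "card e = j" using assms e by (auto simp: is_kgraph_def)
      with g finV have "g ` e \<in> nsets X j"
        by (auto simp: nsets_def bij_betw_def card_image inj_on_subset finite_subset)
      then show ?thesis using mono by blast
    qed
    then show "\<exists>c<r. mono_copy N col c V E"
      using c g X unfolding mono_copy_def by (auto simp: bij_betw_def nsets_def)
  qed
  then show ?thesis ..
qed

lemma ramsey_arrow_ramsey_num:
  "is_kgraph j V E \<Longrightarrow> ramsey_arrow j r V E (ramsey_num j r V E)"
  unfolding ramsey_num_eq_Least by (rule LeastI_ex) (rule ramsey_arrow_exists)

lemma ramsey_num_le: "ramsey_arrow j r V E n \<Longrightarrow> ramsey_num j r V E \<le> n"
  unfolding ramsey_num_eq_Least by (rule Least_le)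

lemma pigeonhole_colour_class:
  assumes "finite B" "\<And>b. b \<in> B \<Longrightarrow> f b < r" "r * (m - 1) < card B"
  shows "\<exists>c<r. m \<le> card {b\<in>B. f b = c}"
proof (rule ccontr)
  assume "\<not> ?thesis"
  then have small: "\<And>c. c < r \<Longrightarrow> card {b\<in>B. f b = c} \<le> m - 1" by force
  have "B = (\<Union>c<r. {b\<in>B. f b = c})" using assms(2) by blast
  then have "card B \<le> (\<Sum>c<r. card {b\<in>B. f b = c})"
    by (metis card_UN_le finite_lessThan)
  also have "\<dots> \<le> (\<Sum>c<r. m - 1)" using small by (intro sum_mono) auto
  finally show False using assms(3) by simp
qed

lemma inj_on_choice_from_large_sets:
  assumes "finite I" "card I \<le> m" "\<And>i. i \<in> I \<Longrightarrow> finite (A i) \<and> m \<le> card (A i)"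
  shows "\<exists>g. inj_on g I \<and> (\<forall>i\<in>I. g i \<in> A i)"
  using assms
proof (induction I rule: finite_induct)
  case empty
  then show ?case by auto
next
  case (insert x I)
  then obtain g where g: "inj_on g I" "\<forall>i\<in>I. g i \<in> A i" by auto
  have "card (g ` I) < card (A x)"
    using insert card_image_le[of I g] by fastforce
  then have "\<not> A x \<subseteq> g ` I"
    using insert(1) card_mono by (metis finite_imageI not_le)
  then obtain y where "y \<in> A x" "y \<notin> g ` I" by blast
  then show ?case
    using g insert(2) by (intro exI[of _ "g(x := y)"]) (auto simp: inj_on_def)
qed

lemma hdegree_one_unique_edge:
  assumes "hdegree E v = 1" "e \<in> E" "e' \<in> E" "v \<in> e" "v \<in> e'"
  shows "e' = e"
proof -
  obtain z where z: "{x\<in>E. v \<in> x} = {z}"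
    using assms(1) card_1_singletonE unfolding hdegree_def by metis
  have "e \<in> {x\<in>E. v \<in> x}" "e' \<in> {x\<in>E. v \<in> x}" using assms(2-) by simp_all
  then show ?thesis unfolding z by simp
qed

locale selfish_deletion =
  fixes k :: nat and V :: "'a set" and E :: "'a set set" and \<sigma> :: "'a set \<Rightarrow> 'a"
  assumes kgraph: "is_kgraph k V E"
    and private_vertex: "\<And>e. e \<in> E \<Longrightarrow> \<sigma> e \<in> e \<and> hdegree E (\<sigma> e) = 1"
begin

definition VG :: "'a set" where "VG = V - \<sigma> ` E"

definition EG :: "'a set set" where "EG = (\<lambda>e. e - {\<sigma> e}) ` E"

lemma edge_subset: "e \<in> E \<Longrightarrow> e \<subseteq> V"
  and card_edge: "e \<in> E \<Longrightarrow> card e = k"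
  and finite_V: "finite V"
  using kgraph by (auto simp: is_kgraph_def)

lemma finite_E: "finite E"
  using finite_V edge_subset by (meson Pow_iff finite_Pow_iff finite_subset subsetI)

lemma private_vertex_unique_edge: "e \<in> E \<Longrightarrow> e' \<in> E \<Longrightarrow> \<sigma> e \<in> e' \<Longrightarrow> e' = e"
  using private_vertex hdegree_one_unique_edge by metis

lemma inj_on_private_vertex: "inj_on \<sigma> E"
  by (metis inj_onI private_vertex private_vertex_unique_edge)

lemma reduced_edge_subset: "e \<in> E \<Longrightarrow> e - {\<sigma> e} \<subseteq> VG"
  using edge_subset private_vertex_unique_edge unfolding VG_def by blast

lemma card_reduced_edge: "e \<in> E \<Longrightarrow> card (e - {\<sigma> e}) = k - 1"
  using card_edge private_vertex by simp

lemma is_kgraph_reduced: "is_kgraph (k - 1) VG EG"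
  using finite_V reduced_edge_subset card_reduced_edge
  by (auto simp: is_kgraph_def VG_def EG_def)

definition glue :: "('a \<Rightarrow> nat) \<Rightarrow> ('a set \<Rightarrow> nat) \<Rightarrow> 'a \<Rightarrow> nat" where
  "glue f b v = (if v \<in> \<sigma> ` E then b (inv_into E \<sigma> v) else f v)"

lemma glue_private_vertex: "e \<in> E \<Longrightarrow> glue f b (\<sigma> e) = b e"
  using inj_on_private_vertex by (simp add: glue_def)

lemma glue_image_edge:
  assumes "e \<in> E"
  shows "glue f b ` e = insert (b e) (f ` (e - {\<sigma> e}))"
proof -
  have "glue f b ` (e - {\<sigma> e}) = f ` (e - {\<sigma> e})"
    using reduced_edge_subset[OF assms] by (intro image_cong) (auto simp: glue_def VG_def)
  moreover have "e = insert (\<sigma> e) (e - {\<sigma> e})" using private_vertex[OF assms] by blast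
  ultimately show ?thesis
    using glue_private_vertex[OF assms] by (metis image_insert)
qed

lemma glue_embedding:
  assumes f: "inj_on f VG" "f ` VG \<subseteq> {..<N}"
    and b: "inj_on b E" "b ` E \<subseteq> {N..<n}" and "N \<le> n"
  shows "inj_on (glue f b) V" "glue f b ` V \<subseteq> {..<n}"
proof -
  have on_private: "N \<le> glue f b v" "glue f b v < n" if "v \<in> \<sigma> ` E" for v
    using that b(2) glue_private_vertex by auto
  have on_reduced: "glue f b v = f v" "glue f b v < N" if "v \<in> VG" for v
    using that f(2) by (auto simp: glue_def VG_def)
  have "\<sigma> ` E \<subseteq> V" using edge_subset private_vertex by blast
  then have V_split: "V = \<sigma> ` E \<union> VG" by (auto simp: VG_def)
  show "glue f b ` V \<subseteq> {..<n}"
  proof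
    fix y assume "y \<in> glue f b ` V"
    then obtain v where "v \<in> \<sigma> ` E \<or> v \<in> VG" "y = glue f b v" using V_split by blast
    then show "y \<in> {..<n}" using on_private(2) on_reduced(2) \<open>N \<le> n\<close> by fastforce
  qed
  have "inj_on (glue f b) (\<sigma> ` E \<union> VG)"
    unfolding inj_on_Un
  proof (intro conjI)
    have "inj_on (glue f b \<circ> \<sigma>) E"
      using b(1) glue_private_vertex inj_on_cong[of E "glue f b \<circ> \<sigma>" b] by simp
    then show "inj_on (glue f b) (\<sigma> ` E)" by (rule inj_on_imageI)
    show "inj_on (glue f b) VG" using f(1) on_reduced(1) inj_on_cong[of VG "glue f b" f] by simp
    have "glue f b ` (\<sigma> ` E - VG) \<subseteq> {N..}" using on_private(1) by auto
    moreover have "glue f b ` (VG - \<sigma> ` E) \<subseteq> {..<N}" using on_reduced(2) by auto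
    moreover have "{N..} \<inter> {..<N} = {}" by auto
    ultimately show "glue f b ` (\<sigma> ` E - VG) \<inter> glue f b ` (VG - \<sigma> ` E) = {}"
      by blast
  qed
  with V_split show "inj_on (glue f b) V" by (simp only:)
qed

lemma ramsey_arrow_extend:
  assumes "0 < k" and G: "ramsey_arrow (k - 1) r VG EG N"
  shows "ramsey_arrow k r V E (N + r * (card E - 1) + 1)"
proof -
  define n where "n = N + r * (card E - 1) + 1"
  define B where "B = {N..<n}"
  have "\<exists>c<r. mono_copy n col c V E" if col: "is_colouring k r n col" for col
  proof -
    have "\<exists>c<r. card E \<le> card {b\<in>B. col (insert b S) = c}"
      if S: "S \<subseteq> {..<N}" "card S = k - 1" for S
    proof (rule pigeonhole_colour_class)
      show "col (insert b S) < r" if "b \<in> B" for b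
      proof -
        have "finite S" "b \<notin> S" using S that finite_subset by (auto simp: B_def)
        with S \<open>0 < k\<close> have "card (insert b S) = k" by simp
        moreover have "insert b S \<subseteq> {..<n}" using that S by (auto simp: B_def n_def)
        ultimately show ?thesis using col unfolding is_colouring_def by blast
      qed
    qed (simp_all add: B_def n_def)
    then have "\<forall>S. \<exists>c. S \<subseteq> {..<N} \<and> card S = k - 1 \<longrightarrow>
        c < r \<and> card E \<le> card {b\<in>B. col (insert b S) = c}" by blast
    from choice[OF this] obtain col' where col': "\<forall>S. S \<subseteq> {..<N} \<and> card S = k - 1 \<longrightarrow>
        col' S < r \<and> card E \<le> card {b\<in>B. col (insert b S) = col' S}" ..
    then have "is_colouring (k - 1) r N col'" by (simp add: is_colouring_def)
    then obtain c f where c: "c < r" and f: "inj_on f VG" "f ` VG \<subseteq> {..<N}"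
        and mono_G: "\<forall>e'\<in>EG. col' (f ` e') = c"
      using G unfolding ramsey_arrow_def mono_copy_def by blast
    define A where "A e = {b\<in>B. col (insert b (f ` (e - {\<sigma> e}))) = c}" for e
    have A_large: "finite (A e) \<and> card E \<le> card (A e)" if e: "e \<in> E" for e
    proof -
      let ?S = "f ` (e - {\<sigma> e})"
      have "?S \<subseteq> {..<N}" using reduced_edge_subset[OF e] f(2) by blast
      moreover have "card ?S = k - 1"
        using card_reduced_edge[OF e] card_image inj_on_subset[OF f(1) reduced_edge_subset[OF e]]
        by metis
      ultimately have "card E \<le> card {b\<in>B. col (insert b ?S) = col' ?S}" using col' by blast
      moreover have "col' ?S = c" using mono_G e by (simp add: EG_def)
      ultimately have "card E \<le> card (A e)" by (simp add: A_def)
      moreover have "finite (A e)" by (simp add: A_def B_def)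
      ultimately show ?thesis by blast
    qed
    have "\<exists>b. inj_on b E \<and> (\<forall>e\<in>E. b e \<in> A e)"
      by (rule inj_on_choice_from_large_sets[OF finite_E order.refl]) (rule A_large)
    then obtain b where b: "inj_on b E" "\<And>e. e \<in> E \<Longrightarrow> b e \<in> A e" by blast
    have "b ` E \<subseteq> {N..<n}" using b(2) by (auto simp: A_def B_def)
    then have "inj_on (glue f b) V" "glue f b ` V \<subseteq> {..<n}"
      using glue_embedding[OF f b(1)] by (simp_all add: n_def)
    moreover have "col (glue f b ` e) = c" if "e \<in> E" for e
      using b(2)[OF that] glue_image_edge[OF that] by (simp add: A_def)
    ultimately show ?thesis using c unfolding mono_copy_def by blast
  qed
  then show ?thesis unfolding ramsey_arrow_def n_def by blast
qed

end

theorem lemma5: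
  fixes k r :: nat and V :: "'a set" and E :: "'a set set" and \<sigma> :: "'a set \<Rightarrow> 'a"
  assumes "k \<ge> 3" and "r \<ge> 2"
    and "is_kgraph k V E" and "selfish E" and "E \<noteq> {}"
    and "\<forall>e\<in>E. \<sigma> e \<in> e \<and> hdegree E (\<sigma> e) = 1"
  shows "ramsey_num k r V E
           \<le> ramsey_num (k - 1) r (V - \<sigma> ` E) ((\<lambda>e. e - {\<sigma> e}) ` E) + r * (card E - 1) + 1"
proof -
  interpret selfish_deletion k V E \<sigma>
    using assms(3,6) by unfold_locales auto
  have "ramsey_arrow (k - 1) r VG EG (ramsey_num (k - 1) r VG EG)"
    using is_kgraph_reduced by (rule ramsey_arrow_ramsey_num)
  then have "ramsey_arrow k r V E (ramsey_num (k - 1) r VG EG + r * (card E - 1) + 1)"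
    using assms(1) by (intro ramsey_arrow_extend) auto
  then show ?thesis
    unfolding VG_def EG_def by (rule ramsey_num_le)
qed

end
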